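(* Let $(\alpha_n)_{n\in\mathbb{N}^+}$ be a sequence in $(0,1)$ converging to $\alpha$, with continued fraction expansions $\alpha_n=[0;a_{n1},a_{n2},\dots]$ and $\alpha=[0;a_1,a_2,\dots]$, and write $\alpha_n=[0;a_{n1},\dots,a_{ni},r_{ni}]$. Suppose that for some $i\in\mathbb{N}^+$ the numbers $a_{n1},\dots,a_{ni}$ ($n\in\mathbb{N}^+$) are bounded. If $(r_{ni})_n$ is not bounded away from $1$ or not bounded away from $\infty$, then $\alpha$ terminates, i.e. $\alpha=[0;a_1,\dots,a_j]$ for some $j\le i$. Moreover, if $a_{n1}\to\infty$ as $n\to\infty$, then $\alpha=0$.
   Context: Continued fraction conventions: $[a_0;a_1,\dots,a_n]$ denotes $a_0+1/(a_1+1/(a_2+\cdots+1/a_n))$ with $a_0\in\mathbb{Z}$, $a_k\in\mathbb{N}^+$ for $1\le k<n$, and last element $a_n>1$. Every real number is identified with its unique continued fraction; a terminating expansion is also written as $[a_0;a_1,\dots,a_n,0,0,\dots]$, with $[a_0;0,0,\dots]=a_0$. For $\alpha=[a_0;a_1,a_2,\dots]$ and $i\ge1$, $\alpha=[a_0;a_1,\dots,a_i,r_i]$ where $r_i:=a_{i+1}+[0;a_{i+2},a_{i+3},\dots]$. *)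

theory Defs
  imports Complex_Main
begin

text \<open>Then a_k = floor (cf_rem x k) is the k-th partial
  quotient (a_k = 0 for all k beyond a terminating expansion, matching the
  convention [a_0;a_1,...,a_n,0,0,...]), and the complete quotient
  r_i = a_(i+1) + [0;a_(i+2),...] equals cf_rem x (i+1).\<close>

fun cf_rem :: "real \<Rightarrow> nat \<Rightarrow> real" where
  "cf_rem x 0 = x"
| "cf_rem x (Suc k) = (if frac (cf_rem x k) = 0 then 0 else 1 / frac (cf_rem x k))"

definition cf_digit :: "real \<Rightarrow> nat \<Rightarrow> int" where
  "cf_digit x k = \<lfloor>cf_rem x k\<rfloor>"

definition cf_tail :: "real \<Rightarrow> nat \<Rightarrow> real" where
  "cf_tail x i = cf_rem x (Suc i)"

end

theory Submission
  imports Defs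
begin

text \<open>If the complete quotient \<open>r\<^sub>i(\<alpha>) = cf_rem \<alpha> (i+1)\<close> is nonzero, every earlier
  remainder is a non-integer, so \<open>x \<mapsto> r\<^sub>i(x)\<close> is continuous at \<open>\<alpha>\<close> and
  \<open>r\<^sub>i(\<alpha>\<^sub>n) \<longrightarrow> r\<^sub>i(\<alpha>) > 1\<close>. A convergent sequence is bounded, and one whose terms
  avoid the value 1 but come arbitrarily close to it must tend to 1; either way
  the hypothesis on \<open>r\<^sub>i(\<alpha>\<^sub>n)\<close> is violated, hence \<open>r\<^sub>i(\<alpha>) = 0\<close> and the expansion of
  \<open>\<alpha>\<close> stops by step \<open>i\<close>.
  For the second claim, \<open>a\<^sub>n\<^sub>1 \<le> 1/\<alpha>\<^sub>n\<close> forces \<open>\<alpha>\<^sub>n \<longrightarrow> 0\<close>.\<close>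

lemma cf_rem_Suc: "cf_rem x (Suc k) = inverse (frac (cf_rem x k))"
  by (simp add: divide_inverse)

lemma cf_rem_Suc_eq_0_or_gt_1: "cf_rem x (Suc k) = 0 \<or> 1 < cf_rem x (Suc k)"
proof -
  have "0 \<le> frac (cf_rem x k)" "frac (cf_rem x k) < 1" by (auto simp: frac_lt_1)
  then show ?thesis by (auto simp: cf_rem_Suc field_simps)
qed

lemma cf_rem_eq_0_mono:
  assumes "cf_rem x k = 0" "k \<le> m"
  shows "cf_rem x m = 0"
  using assms(2)
proof (induction m rule: dec_induct)
  case base
  show ?case using assms(1) .
qed simp

lemma isCont_cf_rem:
  assumes "cf_rem a k \<noteq> 0"
  shows "isCont (\<lambda>x. cf_rem x k) a"
  using assms
proof (induction k)
  case 0
  show ?case by simp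
next
  case (Suc k)
  then have frac_nz: "frac (cf_rem a k) \<noteq> 0" by auto
  then have "cf_rem a k \<noteq> 0" by auto
  then have "isCont (\<lambda>x. cf_rem x k) a" by (rule Suc.IH)
  moreover have "isCont frac (cf_rem a k)"
    using frac_nz by (intro continuous_frac) (simp add: frac_eq_0_iff)
  ultimately have "isCont (\<lambda>x. frac (cf_rem x k)) a" by (rule isCont_o2)
  then show ?case unfolding cf_rem_Suc using frac_nz by (intro continuous_intros)
qed

lemma LIMSEQ_eq_if_approaches_avoided_value:
  fixes f :: "nat \<Rightarrow> real"
  assumes lim: "f \<longlonglongrightarrow> L"
    and avoid: "\<And>n. f n \<noteq> c"
    and approach: "\<And>\<epsilon>. \<epsilon> > 0 \<Longrightarrow> \<exists>n. \<bar>f n - c\<bar> < \<epsilon>"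
  shows "L = c"
proof (rule ccontr)
  assume "L \<noteq> c"
  then have "eventually (\<lambda>n. \<bar>L - c\<bar> / 2 < \<bar>f n - c\<bar>) sequentially"
    using tendsto_rabs[OF tendsto_diff[OF lim tendsto_const]] by (intro order_tendstoD(1)) auto
  then obtain N where far: "\<And>n. n \<ge> N \<Longrightarrow> \<bar>L - c\<bar> / 2 < \<bar>f n - c\<bar>"
    unfolding eventually_sequentially by blast
  define S where "S = insert (\<bar>L - c\<bar> / 2) ((\<lambda>n. \<bar>f n - c\<bar>) ` {..<N})"
  have "finite S" by (simp add: S_def)
  have "Min S > 0"
    using \<open>L \<noteq> c\<close> avoid by (simp add: S_def)
  then obtain n where n: "\<bar>f n - c\<bar> < Min S" using approach by blast
  have "Min S \<le> \<bar>L - c\<bar> / 2" by (rule Min_le[OF \<open>finite S\<close>]) (simp add: S_def)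
  moreover have "Min S \<le> \<bar>f n - c\<bar>" if "n < N"
    by (rule Min_le[OF \<open>finite S\<close>]) (simp add: S_def that)
  ultimately
  show False using n far[of n] by (cases "n < N") auto
qed

lemma cf_rem_eq_0_if_tail_near_1_or_unbounded:
  fixes x :: "nat \<Rightarrow> real"
  assumes conv: "x \<longlonglongrightarrow> a"
    and tail: "(\<forall>\<epsilon>>0. \<exists>n. \<bar>cf_rem (x n) (Suc i) - 1\<bar> < \<epsilon>) \<or> \<not> Bseq (\<lambda>n. cf_rem (x n) (Suc i))"
  shows "cf_rem a (Suc i) = 0"
proof (rule ccontr)
  assume nz: "cf_rem a (Suc i) \<noteq> 0"
  have lim: "(\<lambda>n. cf_rem (x n) (Suc i)) \<longlonglongrightarrow> cf_rem a (Suc i)"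
    using isCont_tendsto_compose[OF isCont_cf_rem[OF nz] conv] .
  have gt_1: "1 < cf_rem a (Suc i)" using nz cf_rem_Suc_eq_0_or_gt_1 by blast
  have avoid: "cf_rem (x n) (Suc i) \<noteq> 1" for n
    using cf_rem_Suc_eq_0_or_gt_1[of "x n" i] by fastforce
  have "\<not> (\<forall>\<epsilon>>0. \<exists>n. \<bar>cf_rem (x n) (Suc i) - 1\<bar> < \<epsilon>)"
  proof
    assume "\<forall>\<epsilon>>0. \<exists>n. \<bar>cf_rem (x n) (Suc i) - 1\<bar> < \<epsilon>"
    then have "cf_rem a (Suc i) = 1"
      by (intro LIMSEQ_eq_if_approaches_avoided_value[OF lim avoid]) blast
    then show False using gt_1 by simp
  qed
  moreover have "Bseq (\<lambda>n. cf_rem (x n) (Suc i))"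
    using convergent_imp_Bseq[OF convergentI[OF lim]] .
  ultimately show False using tail by blast
qed

theorem lemma3:
  fixes \<alpha> :: "nat \<Rightarrow> real" and a :: real and i :: nat
  assumes range: "\<And>n. n \<ge> 1 \<Longrightarrow> 0 < \<alpha> n \<and> \<alpha> n < 1"
    and conv: "\<alpha> \<longlonglongrightarrow> a"
  shows "(i \<ge> 1
          \<and> (\<exists>B. \<forall>n\<ge>1. \<forall>k\<in>{1..i}. cf_digit (\<alpha> n) k \<le> B)
          \<and> ((\<forall>\<epsilon>>0. \<exists>n\<ge>1. \<bar>cf_tail (\<alpha> n) i - 1\<bar> < \<epsilon>)
             \<or> (\<forall>M. \<exists>n\<ge>1. cf_tail (\<alpha> n) i > M))
          \<longrightarrow> (\<exists>j\<le>i. \<forall>k>j. cf_digit a k = 0))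
       \<and> (filterlim (\<lambda>n. real_of_int (cf_digit (\<alpha> n) 1)) at_top sequentially \<longrightarrow> a = 0)"
proof (intro conjI impI)
  assume "i \<ge> 1
          \<and> (\<exists>B. \<forall>n\<ge>1. \<forall>k\<in>{1..i}. cf_digit (\<alpha> n) k \<le> B)
          \<and> ((\<forall>\<epsilon>>0. \<exists>n\<ge>1. \<bar>cf_tail (\<alpha> n) i - 1\<bar> < \<epsilon>)
             \<or> (\<forall>M. \<exists>n\<ge>1. cf_tail (\<alpha> n) i > M))"
  then have "(\<forall>\<epsilon>>0. \<exists>n. \<bar>cf_tail (\<alpha> n) i - 1\<bar> < \<epsilon>) \<or> \<not> Bseq (\<lambda>n. cf_tail (\<alpha> n) i)"
    by (auto simp: Bseq_def) (meson abs_ge_self not_le order.strict_trans1)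
  then have terminated: "cf_rem a (Suc i) = 0"
    unfolding cf_tail_def by (rule cf_rem_eq_0_if_tail_near_1_or_unbounded[OF conv])
  have "cf_rem a k = 0" if "i < k" for k
    using cf_rem_eq_0_mono[OF terminated] that by (simp only: Suc_le_eq)
  then show "\<exists>j\<le>i. \<forall>k>j. cf_digit a k = 0" by (auto simp: cf_digit_def)
next
  assume digits: "filterlim (\<lambda>n. real_of_int (cf_digit (\<alpha> n) 1)) at_top sequentially"
  have "real_of_int (cf_digit (\<alpha> n) 1) \<le> inverse (\<alpha> n)" if "n \<ge> 1" for n
  proof -
    have "frac (\<alpha> n) = \<alpha> n" using range[OF that] by (simp add: frac_eq)
    then show ?thesis by (simp add: cf_digit_def inverse_eq_divide)
  qed
  then have "filterlim (\<lambda>n. inverse (\<alpha> n)) at_top sequentially"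
    by (intro filterlim_at_top_mono[OF digits]) (auto simp: eventually_sequentially)
  then have "\<alpha> \<longlonglongrightarrow> 0" using tendsto_inverse_0_at_top by fastforce
  then show "a = 0" using conv LIMSEQ_unique by blast
qed

end
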